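(* Let $\alpha\in(1,2)$ and let $p\ge2$ be an integer. Then $f^{p,\alpha}(\theta)\ge0$ for all $\theta\in[-\pi,\pi]$, $f^{p,\alpha}(\theta)=0$ for $\theta\in[-\pi,\pi]$ only at $\theta=0$, and this zero has order $\alpha$, i.e. $f^{p,\alpha}(\theta)/|\theta|^\alpha$ tends to a finite positive limit as $\theta\to0$.
   Context: For real $\alpha$ and integer $p\ge 2$, $f^{p,\alpha}(\theta)=\sum_{l\in\mathbb Z}|\theta+2l\pi|^{\alpha}\left(\frac{\sin(\theta/2+l\pi)}{\theta/2+l\pi}\right)^{p+1}$ (with $\frac{\sin x}{x}:=1$ at $x=0$). *)

theory Defs
  imports "HOL-Analysis.Analysis"
begin

definition sinc :: "real \<Rightarrow> real" where
  "sinc x = (if x = 0 then 1 else sin x / x)"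

definition f_term :: "nat \<Rightarrow> real \<Rightarrow> real \<Rightarrow> int \<Rightarrow> real" where
  "f_term p \<alpha> \<theta> l = \<bar>\<theta> + 2 * of_int l * pi\<bar> powr \<alpha> * sinc (\<theta> / 2 + of_int l * pi) ^ (p + 1)"

definition f_p_alpha :: "nat \<Rightarrow> real \<Rightarrow> real \<Rightarrow> real" where
  "f_p_alpha p \<alpha> \<theta> = (\<Sum>\<^sub>\<infinity>l\<in>(UNIV::int set). f_term p \<alpha> \<theta> l)"

end

theory Submission
  imports Defs
begin

text \<open>Away from \<open>\<theta>/2 + l\<pi> = 0\<close> the \<open>l\<close>-th term has modulus
  \<open>2^\<alpha> |sin(\<theta>/2)|^(p+1) |\<theta>/2 + l\<pi>|^(\<alpha>-p-1)\<close>, which is summable in \<open>l\<close> for \<open>\<alpha> < p\<close>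
  and strictly decreasing in \<open>|\<theta>/2 + l\<pi>|\<close>. For \<open>0 < \<theta> \<le> \<pi>\<close>, in each pair of terms
  \<open>2k\<close>, \<open>2k+1\<close> the one with \<open>\<theta>/2 + l\<pi>\<close> closer to the origin is nonnegative and dominates
  the other, so every pair is positive; evenness covers \<open>\<theta> < 0\<close>. Near \<open>0\<close> the term \<open>l = 0\<close> is
  \<open>|\<theta>|^\<alpha> sinc(\<theta>/2)^(p+1) \<sim> |\<theta>|^\<alpha>\<close>, while the others sum to
  \<open>O(|sin(\<theta>/2)|^(p+1)) = O(|\<theta>|^(p+1))\<close>, so \<open>f(\<theta>)/|\<theta>|^\<alpha> \<rightarrow> 1\<close>.\<close>

lemma sinc_minus: "sinc (- x) = sinc x"
  by (simp add: sinc_def)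

lemma isCont_sinc: "isCont sinc 0"
proof -
  have "sinc = (\<lambda>z. if z = 0 then 1 else sin z / z)" by (rule ext) (simp add: sinc_def)
  then show ?thesis using has_field_derivative_sin_z_over_z[of UNIV] DERIV_isCont by metis
qed

lemma abs_sin_plus_int_pi: "\<bar>sin (x + of_int l * pi)\<bar> = \<bar>sin x\<bar>"
proof -
  have "sin (of_int l * pi) = 0" by (metis mult.commute sin_npi_int)
  moreover have "\<bar>cos (of_int l * pi)\<bar> = 1" using cos_npi_int[of l] by (simp add: mult.commute)
  ultimately show ?thesis by (simp add: sin_add abs_mult)
qed

lemma sin_plus_even_int_pi: "sin (x + of_int (2 * k) * pi) = sin x"
proof -
  have "of_int (2 * k) * pi = 2 * pi * of_int k" by simp
  then show ?thesis by (simp only: sin_add) simp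
qed

lemma abs_plus_int_pi_ge:
  assumes "\<bar>y\<bar> \<le> pi / 2"
  shows "\<bar>y + of_int l * pi\<bar> \<ge> \<bar>real_of_int l\<bar> * pi / 2"
proof (cases "l = 0")
  case False
  then have "\<bar>real_of_int l\<bar> * pi \<ge> pi" by (simp add: pi_gt_zero)
  moreover have "\<bar>of_int l * pi\<bar> = \<bar>real_of_int l\<bar> * pi" by (simp add: abs_mult)
  ultimately show ?thesis using assms by linarith
qed simp

lemma f_term_eq:
  assumes "x = t / 2 + of_int l * pi" "x \<noteq> 0"
  shows "f_term p a t l = 2 powr a * (sin x * sgn x) ^ (p + 1) * \<bar>x\<bar> powr (a - real (p + 1))"
proof -
  have "sinc x = sin x * sgn x / \<bar>x\<bar>"
    using assms(2) by (cases "x > 0") (auto simp: sinc_def sgn_if)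
  then have sinc: "sinc x ^ (p + 1) = (sin x * sgn x) ^ (p + 1) / \<bar>x\<bar> ^ (p + 1)"
    by (simp add: power_divide)
  have powr: "\<bar>x\<bar> powr a / \<bar>x\<bar> ^ q = \<bar>x\<bar> powr (a - real q)" for q
    using assms(2) by (simp add: powr_diff powr_realpow)
  have "t + 2 * of_int l * pi = 2 * x" by (simp add: assms(1))
  then have "f_term p a t l = 2 powr a * \<bar>x\<bar> powr a * sinc x ^ (p + 1)"
    by (simp add: f_term_def assms(1)[symmetric] abs_mult powr_mult)
  then show ?thesis unfolding sinc powr[symmetric] by simp
qed

lemma abs_f_term:
  assumes "t / 2 + of_int l * pi \<noteq> 0"
  shows "\<bar>f_term p a t l\<bar> =
    2 powr a * \<bar>sin (t / 2)\<bar> ^ (p + 1) * \<bar>t / 2 + of_int l * pi\<bar> powr (a - real (p + 1))"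
  using assms
  by (simp add: f_term_eq[OF refl assms] abs_mult power_abs abs_sin_plus_int_pi abs_sgn_eq)

lemma f_term_nonneg:
  assumes "x = t / 2 + of_int l * pi" "x \<noteq> 0" "sin x * sgn x \<ge> 0"
  shows "f_term p a t l \<ge> 0"
  using assms by (simp add: f_term_eq[OF assms(1,2)])

lemma abs_f_term_less:
  assumes "x = t / 2 + of_int l * pi" "y = t / 2 + of_int m * pi"
    and "sin (t / 2) \<noteq> 0" "a < real (p + 1)" "y \<noteq> 0" "\<bar>y\<bar> < \<bar>x\<bar>"
  shows "\<bar>f_term p a t l\<bar> < \<bar>f_term p a t m\<bar>"
proof -
  have "x \<noteq> 0" using assms(6) by auto
  then show ?thesis
    using assms by (simp add: abs_f_term powr_less_mono2_neg)
qed

lemma abs_f_term_le: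
  assumes "\<bar>t\<bar> \<le> pi" "l \<noteq> 0" "a \<le> real (p + 1)"
  shows "\<bar>f_term p a t l\<bar> \<le> 2 powr a * (pi / 2) powr (a - real (p + 1)) *
     \<bar>sin (t / 2)\<bar> ^ (p + 1) * \<bar>real_of_int l\<bar> powr (a - real (p + 1))"
proof -
  let ?b = "a - real (p + 1)"
  have ge: "\<bar>t / 2 + of_int l * pi\<bar> \<ge> \<bar>real_of_int l\<bar> * pi / 2"
    using assms(1) by (intro abs_plus_int_pi_ge) simp
  have pos: "\<bar>real_of_int l\<bar> * pi / 2 > 0" using assms(2) by simp
  have "\<bar>t / 2 + of_int l * pi\<bar> powr ?b \<le> (\<bar>real_of_int l\<bar> * pi / 2) powr ?b"
    using assms(3) pos ge by (intro powr_mono2') auto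
  also have "\<dots> = (pi / 2) powr ?b * \<bar>real_of_int l\<bar> powr ?b"
    by (simp add: powr_mult[symmetric] mult_ac)
  finally have "2 powr a * \<bar>sin (t / 2)\<bar> ^ (p + 1) * \<bar>t / 2 + of_int l * pi\<bar> powr ?b
      \<le> 2 powr a * \<bar>sin (t / 2)\<bar> ^ (p + 1) * ((pi / 2) powr ?b * \<bar>real_of_int l\<bar> powr ?b)"
    by (intro mult_left_mono) auto
  moreover have "t / 2 + of_int l * pi \<noteq> 0" using pos ge by auto
  ultimately show ?thesis by (simp add: abs_f_term mult_ac)
qed

lemma summable_on_abs_int_powr:
  assumes "b < -1"
  shows "(\<lambda>l::int. \<bar>real_of_int l\<bar> powr b) summable_on UNIV"
proof -
  have "summable (\<lambda>n. norm (real n powr b))" using summable_real_powr_iff[of b] assms by simp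
  then have N: "(\<lambda>n::nat. real n powr b) summable_on UNIV" by (rule norm_summable_imp_summable_on)
  have "(\<lambda>l::int. \<bar>real_of_int l\<bar> powr b) summable_on (range int)"
    by (subst summable_on_reindex) (auto simp: inj_on_def o_def N)
  moreover have "(\<lambda>l::int. \<bar>real_of_int l\<bar> powr b) summable_on (range (\<lambda>n. - int n))"
    by (subst summable_on_reindex) (auto simp: inj_on_def o_def N)
  moreover have "range int \<union> range (\<lambda>n. - int n) = UNIV"
    using int_cases2 by blast
  ultimately show ?thesis using summable_on_union by metis
qed

lemma f_term_summable_on_nonzero:
  assumes "\<bar>t\<bar> \<le> pi" "a < real p"
  shows "f_term p a t summable_on (UNIV - {0})"
proof -
  let ?b = "a - real (p + 1)"
  let ?g = "\<lambda>l::int. 2 powr a * (pi / 2) powr ?b * \<bar>sin (t / 2)\<bar> ^ (p + 1) * \<bar>real_of_int l\<bar> powr ?b"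
  have "?g summable_on UNIV" using assms by (intro summable_on_cmult_right summable_on_abs_int_powr) auto
  then have "?g summable_on (UNIV - {0})" by (rule summable_on_subset_banach) auto
  then have "(\<lambda>l. norm (f_term p a t l)) summable_on (UNIV - {0})"
    by (rule summable_on_comparison_test) (use abs_f_term_le[OF assms(1)] assms(2) in auto)
  then show ?thesis using summable_on_iff_abs_summable_on_real by blast
qed

lemma f_term_summable_on:
  assumes "\<bar>t\<bar> \<le> pi" "a < real p"
  shows "f_term p a t summable_on UNIV"
proof -
  have "UNIV = insert 0 (UNIV - {0::int})" by auto
  then show ?thesis using f_term_summable_on_nonzero[OF assms] summable_on_insert_iff by metis
qed

lemma has_sum_int_pairs:
  fixes f :: "int \<Rightarrow> 'a::banach"
  assumes "f summable_on UNIV"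
  shows "((\<lambda>k. f (2 * k) + f (2 * k + 1)) has_sum infsum f UNIV) UNIV"
proof -
  let ?E = "range (\<lambda>k::int. 2 * k)" and ?O = "range (\<lambda>k::int. 2 * k + 1)"
  have EO: "?E \<union> ?O = UNIV"
    by (auto simp: image_iff) (metis evenE oddE)
  have disj: "?E \<inter> ?O = {}" by auto presburger
  have "(f has_sum infsum f ?E) ?E" "(f has_sum infsum f ?O) ?O"
    using summable_on_subset_banach[OF assms] by auto
  moreover have "inj (\<lambda>k::int. 2 * k)" "inj (\<lambda>k::int. 2 * k + 1)" by (auto simp: inj_on_def)
  ultimately have "((\<lambda>k. f (2 * k)) has_sum infsum f ?E) UNIV"
      "((\<lambda>k. f (2 * k + 1)) has_sum infsum f ?O) UNIV"
    by (simp_all add: has_sum_reindex o_def)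
  then have "((\<lambda>k. f (2 * k) + f (2 * k + 1)) has_sum (infsum f ?E + infsum f ?O)) UNIV"
    by (rule has_sum_add)
  moreover have "infsum f ?E + infsum f ?O = infsum f UNIV"
    using infsum_Un_disjoint[OF summable_on_subset_banach[OF assms] summable_on_subset_banach[OF assms] disj]
    by (simp add: EO)
  ultimately show ?thesis by simp
qed

lemma f_term_pair_pos:
  assumes "0 < t" "t \<le> pi" "a < real (p + 1)"
  shows "f_term p a t (2 * k) + f_term p a t (2 * k + 1) > 0"
proof -
  define x where "x l = t / 2 + of_int l * pi" for l :: int
  have s: "sin (t / 2) > 0" using assms by (intro sin_gt_zero) auto
  have x_odd: "x (2 * k + 1) = x (2 * k) + pi" by (simp add: x_def algebra_simps)
  have sin_even: "sin (x (2 * k)) = sin (t / 2)" unfolding x_def by (rule sin_plus_even_int_pi)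
  show ?thesis
  proof (cases "k \<ge> 0")
    case True
    then have "of_int (2 * k) * pi \<ge> 0" by simp
    then have pos: "x (2 * k) > 0" using assms unfolding x_def by linarith
    then have "f_term p a t (2 * k) \<ge> 0"
      using s sin_even by (intro f_term_nonneg[OF x_def]) auto
    moreover have "\<bar>f_term p a t (2 * k + 1)\<bar> < \<bar>f_term p a t (2 * k)\<bar>"
      using pos x_odd s assms(3) by (intro abs_f_term_less[OF x_def x_def]) auto
    ultimately show ?thesis by linarith
  next
    case False
    then have "of_int (2 * k + 1) * pi \<le> -1 * pi" by (intro mult_right_mono) auto
    then have neg: "x (2 * k + 1) < 0" using assms unfolding x_def by auto
    have closer: "\<bar>x (2 * k + 1)\<bar> < \<bar>x (2 * k)\<bar>" using neg x_odd pi_gt_zero by linarith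
    have "sin (x (2 * k + 1)) = - sin (t / 2)" using x_odd sin_even by simp
    then have "f_term p a t (2 * k + 1) \<ge> 0"
      using s neg by (intro f_term_nonneg[OF x_def]) auto
    moreover have "\<bar>f_term p a t (2 * k)\<bar> < \<bar>f_term p a t (2 * k + 1)\<bar>"
      using closer neg s assms(3) by (intro abs_f_term_less[OF x_def x_def]) auto
    ultimately show ?thesis by linarith
  qed
qed

lemma f_p_alpha_pos:
  assumes "0 < t" "t \<le> pi" "a < real p"
  shows "f_p_alpha p a t > 0"
proof -
  define g where "g k = f_term p a t (2 * k) + f_term p a t (2 * k + 1)" for k :: int
  have g_pos: "g k > 0" for k
    unfolding g_def using assms by (intro f_term_pair_pos) auto
  have "f_term p a t summable_on UNIV"
    using assms by (intro f_term_summable_on) auto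
  then have all: "(g has_sum f_p_alpha p a t) UNIV"
    unfolding g_def f_p_alpha_def by (rule has_sum_int_pairs)
  have first: "(g has_sum g 0) {0}"
    using has_sum_finite[of "{0}" g] by simp
  have "g 0 \<le> f_p_alpha p a t"
    by (rule has_sum_mono2[OF first all]) (auto intro: less_imp_le g_pos)
  then show ?thesis using g_pos[of 0] by linarith
qed

lemma f_p_alpha_minus: "f_p_alpha p a (- t) = f_p_alpha p a t"
proof -
  have f_term_minus: "f_term p a t \<circ> uminus = f_term p a (- t)"
  proof
    fix l :: int
    have "- t + 2 * of_int l * pi = - (t + 2 * of_int (- l) * pi)"
      and "- t / 2 + of_int l * pi = - (t / 2 + of_int (- l) * pi)" by simp_all
    then show "(f_term p a t \<circ> uminus) l = f_term p a (- t) l"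
      unfolding f_term_def o_def by (simp only: abs_minus_cancel sinc_minus)
  qed
  have "f_p_alpha p a t = infsum (f_term p a t) (range uminus)"
    by (simp add: f_p_alpha_def surj_def)
  also have "\<dots> = infsum (f_term p a (- t)) UNIV"
    unfolding f_term_minus[symmetric] by (rule infsum_reindex) simp
  finally show ?thesis by (simp add: f_p_alpha_def)
qed

lemma f_p_alpha_0: "f_p_alpha p a 0 = 0"
proof -
  have "f_term p a 0 l = 0" for l
  proof (cases "l = 0")
    case False
    have "sin (of_int l * pi) = 0" by (metis mult.commute sin_npi_int)
    then show ?thesis using False by (simp add: f_term_def sinc_def)
  qed (simp add: f_term_def)
  then show ?thesis by (simp add: f_p_alpha_def)
qed

lemma f_p_alpha_split:
  assumes "\<bar>t\<bar> \<le> pi" "a < real p"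
  shows "f_p_alpha p a t = \<bar>t\<bar> powr a * sinc (t / 2) ^ (p + 1) + infsum (f_term p a t) (UNIV - {0})"
proof -
  have "UNIV = insert 0 (UNIV - {0::int})" by auto
  then have "f_p_alpha p a t = f_term p a t 0 + infsum (f_term p a t) (UNIV - {0})"
    unfolding f_p_alpha_def using infsum_insert[OF f_term_summable_on_nonzero[OF assms], of 0] by simp
  then show ?thesis by (simp add: f_term_def)
qed

lemma abs_infsum_f_term_nonzero_le:
  assumes "\<bar>t\<bar> \<le> pi" "a < real p"
  defines "b \<equiv> a - real (p + 1)"
  shows "\<bar>infsum (f_term p a t) (UNIV - {0})\<bar> \<le>
    2 powr a * (pi / 2) powr b * infsum (\<lambda>l::int. \<bar>real_of_int l\<bar> powr b) (UNIV - {0})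
    * \<bar>sin (t / 2)\<bar> ^ (p + 1)"
proof -
  let ?C = "2 powr a * (pi / 2) powr b * \<bar>sin (t / 2)\<bar> ^ (p + 1)"
  have w: "(\<lambda>l::int. \<bar>real_of_int l\<bar> powr b) summable_on (UNIV - {0})"
    using assms by (intro summable_on_subset_banach[OF summable_on_abs_int_powr]) auto
  have norm: "(\<lambda>l. norm (f_term p a t l)) summable_on (UNIV - {0})"
    using f_term_summable_on_nonzero[OF assms(1,2)] summable_on_iff_abs_summable_on_real by blast
  have "\<bar>infsum (f_term p a t) (UNIV - {0})\<bar> \<le> infsum (\<lambda>l. norm (f_term p a t l)) (UNIV - {0})"
    using norm_infsum_bound[OF norm] by simp
  also have "\<dots> \<le> infsum (\<lambda>l. ?C * \<bar>real_of_int l\<bar> powr b) (UNIV - {0})"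
    using abs_f_term_le[OF assms(1)] assms(2)
    by (intro infsum_mono norm summable_on_cmult_right w) (auto simp: b_def)
  also have "\<dots> = ?C * infsum (\<lambda>l::int. \<bar>real_of_int l\<bar> powr b) (UNIV - {0})"
    by (rule infsum_cmult_right')
  finally show ?thesis by (simp add: mult_ac)
qed

lemma f_p_alpha_over_powr_tendsto:
  assumes "a < real p"
  shows "((\<lambda>t. f_p_alpha p a t / \<bar>t\<bar> powr a) \<longlongrightarrow> 1) (at 0)"
proof -
  define K where "K = 2 powr a * (pi / 2) powr (a - real (p + 1)) *
    infsum (\<lambda>l::int. \<bar>real_of_int l\<bar> powr (a - real (p + 1))) (UNIV - {0})"
  define R where "R t = infsum (f_term p a t) (UNIV - {0})" for t
  have "K \<ge> 0" unfolding K_def by (intro mult_nonneg_nonneg infsum_nonneg) auto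
  have near_0: "\<forall>\<^sub>F t in at 0. \<bar>t\<bar> \<le> pi \<and> t \<noteq> 0"
    unfolding eventually_at by (rule exI[of _ pi]) (auto simp: dist_real_def)
  have R_le: "norm (R t / \<bar>t\<bar> powr a) \<le> K * \<bar>t\<bar> powr (real (p + 1) - a)"
    if "\<bar>t\<bar> \<le> pi" "t \<noteq> 0" for t
  proof -
    have "\<bar>R t\<bar> \<le> K * \<bar>sin (t / 2)\<bar> ^ (p + 1)"
      using abs_infsum_f_term_nonzero_le[OF that(1) assms] unfolding R_def K_def .
    also have "\<dots> \<le> K * \<bar>t\<bar> ^ (p + 1)"
      using abs_sin_x_le_abs_x[of "t / 2"] \<open>K \<ge> 0\<close> by (intro mult_left_mono power_mono) auto
    also have "\<dots> = K * \<bar>t\<bar> powr real (p + 1)"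
      using that(2) by (subst powr_realpow) auto
    finally have "\<bar>R t\<bar> / \<bar>t\<bar> powr a \<le> K * \<bar>t\<bar> powr real (p + 1) / \<bar>t\<bar> powr a"
      by (rule divide_right_mono) simp
    then show ?thesis by (simp add: abs_divide powr_diff)
  qed
  have "((\<lambda>t::real. t / 2) \<longlongrightarrow> 0) (at 0)"
    by (rule tendsto_divide_zero[OF tendsto_ident_at])
  then have "((\<lambda>t. sinc (t / 2)) \<longlongrightarrow> sinc 0) (at 0)"
    by (rule isCont_tendsto_compose[OF isCont_sinc])
  from tendsto_power[OF this, of "p + 1"]
  have main: "((\<lambda>t. sinc (t / 2) ^ (p + 1)) \<longlongrightarrow> 1) (at 0)" by (simp add: sinc_def)
  have "((\<lambda>t::real. \<bar>t\<bar> powr (real (p + 1) - a)) \<longlongrightarrow> 0) (at 0)"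
    using assms by (intro tendsto_zero_powrI tendsto_rabs_zero tendsto_ident_at) auto
  then have majorant: "((\<lambda>t::real. K * \<bar>t\<bar> powr (real (p + 1) - a)) \<longlongrightarrow> 0) (at 0)"
    by (rule tendsto_mult_right_zero)
  have tail: "((\<lambda>t. R t / \<bar>t\<bar> powr a) \<longlongrightarrow> 0) (at 0)"
  proof (rule Lim_null_comparison[OF _ majorant])
    show "\<forall>\<^sub>F t in at 0. norm (R t / \<bar>t\<bar> powr a) \<le> K * \<bar>t\<bar> powr (real (p + 1) - a)"
      using near_0 by (rule eventually_mono) (blast intro: R_le)
  qed
  have "\<forall>\<^sub>F t in at 0. sinc (t / 2) ^ (p + 1) + R t / \<bar>t\<bar> powr a = f_p_alpha p a t / \<bar>t\<bar> powr a"
    using near_0 by (rule eventually_mono) (simp add: f_p_alpha_split[OF _ assms] R_def add_divide_distrib)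
  from Lim_transform_eventually[OF tendsto_add[OF main tail] this] show ?thesis by simp
qed

theorem corollary5p3:
  fixes \<alpha> :: real and p :: nat
  assumes "1 < \<alpha>" and "\<alpha> < 2" and "2 \<le> p"
  shows "(\<forall>\<theta>\<in>{-pi..pi}. f_term p \<alpha> \<theta> summable_on (UNIV::int set))
    \<and> (\<forall>\<theta>\<in>{-pi..pi}. f_p_alpha p \<alpha> \<theta> \<ge> 0)
    \<and> {\<theta>\<in>{-pi..pi}. f_p_alpha p \<alpha> \<theta> = 0} = {0}
    \<and> (\<exists>L>0. ((\<lambda>\<theta>. f_p_alpha p \<alpha> \<theta> / \<bar>\<theta>\<bar> powr \<alpha>) \<longlongrightarrow> L) (at 0))"
proof -
  have \<alpha>_less_p: "\<alpha> < real p" using assms by linarith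
  have pos: "f_p_alpha p \<alpha> \<theta> > 0" if "\<theta> \<in> {-pi..pi}" "\<theta> \<noteq> 0" for \<theta>
    using f_p_alpha_pos[of "\<bar>\<theta>\<bar>", OF _ _ \<alpha>_less_p] f_p_alpha_minus[of p \<alpha> \<theta>] that
    by (cases "\<theta> > 0") auto
  have "\<forall>\<theta>\<in>{-pi..pi}. f_term p \<alpha> \<theta> summable_on UNIV"
    using f_term_summable_on \<alpha>_less_p by auto
  moreover have "\<forall>\<theta>\<in>{-pi..pi}. f_p_alpha p \<alpha> \<theta> \<ge> 0"
    using pos f_p_alpha_0 by (metis less_imp_le order_refl)
  moreover have "{\<theta>\<in>{-pi..pi}. f_p_alpha p \<alpha> \<theta> = 0} = {0}"
    using pos f_p_alpha_0 pi_gt_zero by force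
  moreover have "((\<lambda>\<theta>. f_p_alpha p \<alpha> \<theta> / \<bar>\<theta>\<bar> powr \<alpha>) \<longlongrightarrow> 1) (at 0)"
    by (rule f_p_alpha_over_powr_tendsto[OF \<alpha>_less_p])
  ultimately show ?thesis by auto
qed

end
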